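(* Fix mixture proportions $\pi_1,\ldots,\pi_M\in(0,1)$ with $\sum_i\pi_i=1$ and a kernel $K$ on $\{1,\ldots,M\}$ with $\sum_i\pi_iK(i,i)-\sum_{i,j}\pi_i\pi_jK(i,j)>0$. Let $W$ be a random variable and, for $i=1,\ldots,M$, let $Y_i$ be a random element of a measurable space $\mathcal Z$ defined jointly with $W$, with $Y_i\sim P_i$ (the law of $W$ being the same in each pair). Denote by $\eta(Y_1|W,\ldots,Y_M|W)$ the KMD of the conditional distributions of $Y_1,\ldots,Y_M$ given $W$. Then $$\mathbb E_W\big[\eta(Y_1|W,\ldots,Y_M|W)\big]\ge\eta(P_1,\ldots,P_M).$$
   Context: A kernel on $\{1,\ldots,M\}$ is a symmetric $K$ with $[K(i,j)]$ positive semidefinite. For probability measures $R_1,\dots,R_M$ on $\mathcal Z$: let $(\tilde Z,\tilde\Delta)$ have $\mathbb P(\tilde\Delta=i)=\pi_i$ and $\tilde Z\mid\tilde\Delta=i\sim R_i$; let $(\tilde Z_1,\tilde\Delta_1),(\tilde Z_2,\tilde\Delta_2)$ be i.i.d. copies; let $\tilde\Delta'$ satisfy $(\tilde Z,\tilde\Delta')\overset d=(\tilde Z,\tilde\Delta)$ with $\tilde\Delta,\tilde\Delta'$ conditionally independent given $\tilde Z$. The KMD is $$\eta(R_1,\ldots,R_M)=\frac{\mathbb E[K(\tilde\Delta,\tilde\Delta')]-\mathbb E[K(\tilde\Delta_1,\tilde\Delta_2)]}{\mathbb E[K(\tilde\Delta,\tilde\Delta)]-\mathbb E[K(\tilde\Delta_1,\tilde\Delta_2)]}.$$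 *)

theory Defs
  imports "HOL-Probability.Probability"
begin

definition kernel_on :: "nat \<Rightarrow> (nat \<Rightarrow> nat \<Rightarrow> real) \<Rightarrow> bool" where
  "kernel_on M K \<longleftrightarrow>
     (\<forall>i\<in>{1..M}. \<forall>j\<in>{1..M}. K i j = K j i) \<and>
     (\<forall>c::nat \<Rightarrow> real. 0 \<le> (\<Sum>i\<in>{1..M}. \<Sum>j\<in>{1..M}. c i * c j * K i j))"

text \<open>Law of the mixture variable Z~ : P(Z~ in A) = sum_i pi_i R_i(A).\<close>
definition mixture :: "nat \<Rightarrow> (nat \<Rightarrow> real) \<Rightarrow> 'a measure \<Rightarrow> (nat \<Rightarrow> 'a measure) \<Rightarrow> 'a measure" where
  "mixture M \<pi> Z R = measure_of (space Z) (sets Z)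
     (\<lambda>A. \<Sum>i\<in>{1..M}. ennreal (\<pi> i) * emeasure (R i) A)"

text \<open>Conditional probability P(Delta~ = i | Z~ = z) = pi_i dR_i/dQ (z), Q the mixture law.\<close>
definition cond_label_prob ::
  "nat \<Rightarrow> (nat \<Rightarrow> real) \<Rightarrow> 'a measure \<Rightarrow> (nat \<Rightarrow> 'a measure) \<Rightarrow> nat \<Rightarrow> 'a \<Rightarrow> real" where
  "cond_label_prob M \<pi> Z R i z = \<pi> i * enn2real (RN_deriv (mixture M \<pi> Z R) (R i) z)"

text \<open>E[K(Delta~,Delta~')] where Delta~, Delta~' are conditionally independent given Z~,
  each with conditional law P(Delta~ = . | Z~).\<close>
definition kmd_cross :: "nat \<Rightarrow> (nat \<Rightarrow> real) \<Rightarrow> (nat \<Rightarrow> nat \<Rightarrow> real) \<Rightarrow> 'a measure \<Rightarrow> (nat \<Rightarrow> 'a measure) \<Rightarrow> real" where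
  "kmd_cross M \<pi> K Z R = (\<integral>z. (\<Sum>i\<in>{1..M}. \<Sum>j\<in>{1..M}.
       K i j * cond_label_prob M \<pi> Z R i z * cond_label_prob M \<pi> Z R j z) \<partial>mixture M \<pi> Z R)"

text \<open>E[K(Delta~,Delta~)] and E[K(Delta~_1,Delta~_2)].\<close>
definition kmd_diag :: "nat \<Rightarrow> (nat \<Rightarrow> real) \<Rightarrow> (nat \<Rightarrow> nat \<Rightarrow> real) \<Rightarrow> real" where
  "kmd_diag M \<pi> K = (\<Sum>i\<in>{1..M}. \<pi> i * K i i)"

definition kmd_indep :: "nat \<Rightarrow> (nat \<Rightarrow> real) \<Rightarrow> (nat \<Rightarrow> nat \<Rightarrow> real) \<Rightarrow> real" where
  "kmd_indep M \<pi> K = (\<Sum>i\<in>{1..M}. \<Sum>j\<in>{1..M}. \<pi> i * \<pi> j * K i j)"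

definition kmd :: "nat \<Rightarrow> (nat \<Rightarrow> real) \<Rightarrow> (nat \<Rightarrow> nat \<Rightarrow> real) \<Rightarrow> 'a measure \<Rightarrow> (nat \<Rightarrow> 'a measure) \<Rightarrow> real" where
  "kmd M \<pi> K Z R = (kmd_cross M \<pi> K Z R - kmd_indep M \<pi> K) / (kmd_diag M \<pi> K - kmd_indep M \<pi> K)"

end

(* Let p(z) be the vector of conditional label probabilities under the mixture Q of the R_i.
   The cross term E[K(Delta,Delta')] equals the integral of p^T K p over Q, and for every
   measurable c with values in [-1,1]^M positive semidefiniteness of K gives

     sum_j pi_j * int (2 (K c)_j - c^T K c) dR_j = int (2 c^T K p - c^T K c) dQ
                                                  <= int p^T K p dQ,

   with equality for c = p. The left-hand side is linear in (R_1,...,R_M), so the cross term is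
   a supremum of linear functionals and therefore convex under mixing. The laws P_i are the
   mixtures over W of the conditional laws kappa_i(W); evaluating at the optimal c for the P_i
   gives cross(P) <= E_W[cross(kappa(W))], and eta inherits this inequality because its
   normalisation does not depend on the laws. *)

theory Submission
  imports Defs
begin

definition kform :: "nat \<Rightarrow> (nat \<Rightarrow> nat \<Rightarrow> real) \<Rightarrow> (nat \<Rightarrow> real) \<Rightarrow> (nat \<Rightarrow> real) \<Rightarrow> real" where
  "kform M K a b = (\<Sum>i\<in>{1..M}. \<Sum>j\<in>{1..M}. K i j * a i * b j)"

definition kabs :: "nat \<Rightarrow> (nat \<Rightarrow> nat \<Rightarrow> real) \<Rightarrow> real" where
  "kabs M K = (\<Sum>i\<in>{1..M}. \<Sum>j\<in>{1..M}. \<bar>K i j\<bar>)"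

lemma kform_cong:
  assumes "\<And>i. i \<in> {1..M} \<Longrightarrow> a i = a' i" "\<And>i. i \<in> {1..M} \<Longrightarrow> b i = b' i"
  shows "kform M K a b = kform M K a' b'"
  unfolding kform_def using assms by (intro sum.cong refl) auto

lemma kform_commute:
  assumes "kernel_on M K"
  shows "kform M K a b = kform M K b a"
proof -
  have "kform M K a b = (\<Sum>j\<in>{1..M}. \<Sum>i\<in>{1..M}. K i j * a i * b j)"
    unfolding kform_def by (rule sum.swap)
  also have "\<dots> = kform M K b a"
    unfolding kform_def using assms unfolding kernel_on_def
    by (intro sum.cong refl) (auto simp: mult_ac)
  finally show ?thesis .
qed

lemma kform_nonneg:
  assumes "kernel_on M K"
  shows "0 \<le> kform M K a a"
  using assms unfolding kernel_on_def kform_def by (simp add: mult_ac)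

lemma kform_polarization_le:
  assumes "kernel_on M K"
  shows "2 * kform M K c a - kform M K c c \<le> kform M K a a"
proof -
  have "kform M K (\<lambda>i. a i - c i) (\<lambda>i. a i - c i)
      = kform M K a a - kform M K a c - kform M K c a + kform M K c c"
    unfolding kform_def by (simp add: algebra_simps sum_subtractf sum.distrib)
  then show ?thesis
    using kform_nonneg[OF assms, of "\<lambda>i. a i - c i"] kform_commute[OF assms, of a c] by linarith
qed

lemma abs_kform_le:
  assumes "\<And>i. i \<in> {1..M} \<Longrightarrow> \<bar>a i\<bar> \<le> 1" "\<And>i. i \<in> {1..M} \<Longrightarrow> \<bar>b i\<bar> \<le> 1"
  shows "\<bar>kform M K a b\<bar> \<le> kabs M K"
proof -
  have "\<bar>kform M K a b\<bar> \<le> (\<Sum>i\<in>{1..M}. \<Sum>j\<in>{1..M}. \<bar>K i j * a i * b j\<bar>)"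
    unfolding kform_def by (rule order_trans[OF sum_abs sum_mono[OF sum_abs]])
  also have "\<dots> \<le> kabs M K"
    unfolding kabs_def
  proof (intro sum_mono)
    fix i j assume "i \<in> {1..M}" "j \<in> {1..M}"
    then have "\<bar>a i * b j\<bar> \<le> 1" using assms by (simp add: abs_mult mult_le_one)
    then show "\<bar>K i j * a i * b j\<bar> \<le> \<bar>K i j\<bar>"
      using mult_left_mono[of "\<bar>a i * b j\<bar>" 1 "\<bar>K i j\<bar>"] by (simp add: abs_mult mult.assoc)
  qed
  finally show ?thesis .
qed

lemma abs_kernel_column_le:
  assumes "\<And>i. i \<in> {1..M} \<Longrightarrow> \<bar>a i\<bar> \<le> 1" "j \<in> {1..M}"
  shows "\<bar>\<Sum>i\<in>{1..M}. K i j * a i\<bar> \<le> kabs M K"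
proof -
  have "\<bar>\<Sum>i\<in>{1..M}. K i j * a i\<bar> \<le> (\<Sum>i\<in>{1..M}. \<bar>K i j\<bar>)"
  proof (rule order_trans[OF sum_abs sum_mono])
    fix i assume "i \<in> {1..M}"
    then show "\<bar>K i j * a i\<bar> \<le> \<bar>K i j\<bar>"
      using assms(1) mult_left_mono[of "\<bar>a i\<bar>" 1 "\<bar>K i j\<bar>"] by (simp add: abs_mult)
  qed
  also have "\<dots> \<le> kabs M K"
    unfolding kabs_def using assms(2) by (intro sum_mono member_le_sum) auto
  finally show ?thesis .
qed

definition kmd_test :: "nat \<Rightarrow> (nat \<Rightarrow> nat \<Rightarrow> real) \<Rightarrow> (nat \<Rightarrow> 'a \<Rightarrow> real) \<Rightarrow> nat \<Rightarrow> 'a \<Rightarrow> real" where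
  "kmd_test M K c j z = 2 * (\<Sum>i\<in>{1..M}. K i j * c i z) - kform M K (\<lambda>i. c i z) (\<lambda>i. c i z)"

definition kmd_dual ::
  "nat \<Rightarrow> (nat \<Rightarrow> real) \<Rightarrow> (nat \<Rightarrow> nat \<Rightarrow> real) \<Rightarrow> (nat \<Rightarrow> 'a \<Rightarrow> real) \<Rightarrow> (nat \<Rightarrow> 'a measure) \<Rightarrow> real" where
  "kmd_dual M \<pi> K c R = (\<Sum>j\<in>{1..M}. \<pi> j * (\<integral>z. kmd_test M K c j z \<partial>R j))"

lemma abs_kmd_test_le:
  assumes "\<And>i. i \<in> {1..M} \<Longrightarrow> \<bar>c i z\<bar> \<le> 1" "j \<in> {1..M}"
  shows "\<bar>kmd_test M K c j z\<bar> \<le> 3 * kabs M K"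
  using abs_kernel_column_le[of M "\<lambda>i. c i z" j K] abs_kform_le[of M "\<lambda>i. c i z" "\<lambda>i. c i z" K] assms
  unfolding kmd_test_def by auto

lemma borel_measurable_kmd_test:
  assumes "\<And>i. i \<in> {1..M} \<Longrightarrow> c i \<in> borel_measurable Z"
  shows "kmd_test M K c j \<in> borel_measurable Z"
proof -
  have "(\<lambda>z. kmd_test M K c j z) \<in> borel_measurable Z"
    unfolding kmd_test_def kform_def using assms by measurable
  then show ?thesis by simp
qed

lemma sum_mult_kmd_test:
  assumes "(\<Sum>j\<in>{1..M}. b j) = 1"
  shows "(\<Sum>j\<in>{1..M}. b j * kmd_test M K c j z)
    = 2 * kform M K (\<lambda>i. c i z) b - kform M K (\<lambda>i. c i z) (\<lambda>i. c i z)"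
proof -
  have "(\<Sum>j\<in>{1..M}. b j * kmd_test M K c j z)
      = 2 * (\<Sum>j\<in>{1..M}. \<Sum>i\<in>{1..M}. K i j * c i z * b j)
        - (\<Sum>j\<in>{1..M}. b j) * kform M K (\<lambda>i. c i z) (\<lambda>i. c i z)"
    unfolding kmd_test_def
    by (simp add: sum_distrib_left sum_distrib_right right_diff_distrib sum_subtractf mult_ac)
  moreover have "(\<Sum>j\<in>{1..M}. \<Sum>i\<in>{1..M}. K i j * c i z * b j) = kform M K (\<lambda>i. c i z) b"
    unfolding kform_def by (rule sum.swap)
  ultimately show ?thesis
    using assms by simp
qed

lemma (in prob_space) abs_integral_le:
  fixes f :: "'a \<Rightarrow> real"
  assumes "f \<in> borel_measurable M" "\<And>z. z \<in> space M \<Longrightarrow> \<bar>f z\<bar> \<le> B"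
  shows "\<bar>\<integral>z. f z \<partial>M\<bar> \<le> B"
proof -
  have "integrable M f" using assms by (intro integrable_const_bound[where B=B]) auto
  moreover have "-B \<le> f z \<and> f z \<le> B" if "z \<in> space M" for z
    using assms(2)[OF that] by linarith
  ultimately show ?thesis
    using integral_le_const[of f B] integral_ge_const[of f "-B"] by (auto intro: AE_I2)
qed

lemma integral_bind_prob_algebra:
  fixes f :: "'a \<Rightarrow> real"
  assumes L: "prob_space L" and \<kappa>: "\<kappa> \<in> L \<rightarrow>\<^sub>M prob_algebra Z"
    and f: "f \<in> borel_measurable Z" and f_bound: "\<And>z. z \<in> space Z \<Longrightarrow> \<bar>f z\<bar> \<le> B"
  shows "integrable L (\<lambda>w. \<integral>z. f z \<partial>\<kappa> w)"
    and "(\<integral>z. f z \<partial>(L \<bind> \<kappa>)) = (\<integral>w. (\<integral>z. f z \<partial>\<kappa> w) \<partial>L)"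
proof -
  interpret L: prob_space L by (rule L)
  have \<kappa>_sub: "\<kappa> \<in> L \<rightarrow>\<^sub>M subprob_algebra Z" by (rule measurable_prob_algebraD[OF \<kappa>])
  have \<kappa>_w: "prob_space (\<kappa> w)" "sets (\<kappa> w) = sets Z" if "w \<in> space L" for w
    using measurable_space[OF \<kappa> that] by (auto simp: space_prob_algebra)
  show "integrable L (\<lambda>w. \<integral>z. f z \<partial>\<kappa> w)"
  proof (rule L.integrable_const_bound[where B=B])
    show "AE w in L. norm (\<integral>z. f z \<partial>\<kappa> w) \<le> B"
    proof (rule AE_I2)
      fix w assume w: "w \<in> space L"
      have "f \<in> borel_measurable (\<kappa> w)"
        by (subst measurable_cong_sets[OF \<kappa>_w(2)[OF w] refl]) (rule f)
      moreover have "\<bar>f z\<bar> \<le> B" if "z \<in> space (\<kappa> w)" for z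
        using f_bound that sets_eq_imp_space_eq[OF \<kappa>_w(2)[OF w]] by simp
      ultimately show "norm (\<integral>z. f z \<partial>\<kappa> w) \<le> B"
        using prob_space.abs_integral_le[OF \<kappa>_w(1)[OF w]] by simp
    qed
    show "(\<lambda>w. \<integral>z. f z \<partial>\<kappa> w) \<in> borel_measurable L"
      using measurable_compose[OF \<kappa>_sub integral_measurable_subprob_algebra[OF f]] by (simp add: comp_def)
  qed
  have "AE w in L. emeasure (\<kappa> w) (space (\<kappa> w)) \<le> ennreal 1"
    using \<kappa>_w by (intro AE_I2) (simp add: prob_space.emeasure_space_1)
  then show "(\<integral>z. f z \<partial>(L \<bind> \<kappa>)) = (\<integral>w. (\<integral>z. f z \<partial>\<kappa> w) \<partial>L)"
    by (intro integral_bind[OF f f_bound \<kappa>_sub L.finite_measure_axioms])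
qed

lemma kmd_dual_bind:
  assumes L: "prob_space L" and \<kappa>: "\<And>i. i \<in> {1..M} \<Longrightarrow> \<kappa> i \<in> L \<rightarrow>\<^sub>M prob_algebra Z"
    and c: "\<And>i. i \<in> {1..M} \<Longrightarrow> c i \<in> borel_measurable Z"
    and c_bound: "\<And>i z. i \<in> {1..M} \<Longrightarrow> \<bar>c i z\<bar> \<le> 1"
  shows "integrable L (\<lambda>w. kmd_dual M \<pi> K c (\<lambda>i. \<kappa> i w))"
    and "kmd_dual M \<pi> K c (\<lambda>i. L \<bind> \<kappa> i) = (\<integral>w. kmd_dual M \<pi> K c (\<lambda>i. \<kappa> i w) \<partial>L)"
proof -
  have test_bind:
      "integrable L (\<lambda>w. \<integral>z. kmd_test M K c j z \<partial>\<kappa> j w)"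
      "(\<integral>z. kmd_test M K c j z \<partial>(L \<bind> \<kappa> j)) = (\<integral>w. (\<integral>z. kmd_test M K c j z \<partial>\<kappa> j w) \<partial>L)"
    if j: "j \<in> {1..M}" for j
    using integral_bind_prob_algebra[OF L \<kappa>[OF j] borel_measurable_kmd_test[OF c]
        abs_kmd_test_le[of M c, OF c_bound j]] by auto
  show "integrable L (\<lambda>w. kmd_dual M \<pi> K c (\<lambda>i. \<kappa> i w))"
    unfolding kmd_dual_def using test_bind(1) by auto
  show "kmd_dual M \<pi> K c (\<lambda>i. L \<bind> \<kappa> i) = (\<integral>w. kmd_dual M \<pi> K c (\<lambda>i. \<kappa> i w) \<partial>L)"
    unfolding kmd_dual_def using test_bind by (simp add: Bochner_Integration.integral_sum)
qed

locale label_mixture =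
  fixes M :: nat and \<pi> :: "nat \<Rightarrow> real" and Z :: "'a measure" and R :: "nat \<Rightarrow> 'a measure"
  assumes pi_pos: "\<And>i. i \<in> {1..M} \<Longrightarrow> 0 < \<pi> i"
    and pi_sum: "(\<Sum>i\<in>{1..M}. \<pi> i) = 1"
    and prob_space_component: "\<And>i. i \<in> {1..M} \<Longrightarrow> prob_space (R i)"
    and sets_component: "\<And>i. i \<in> {1..M} \<Longrightarrow> sets (R i) = sets Z"
begin

abbreviation "Q \<equiv> mixture M \<pi> Z R"

abbreviation "p \<equiv> cond_label_prob M \<pi> Z R"

lemma sets_mixture[simp]: "sets Q = sets Z"
  unfolding mixture_def by (simp add: sets.space_closed)

lemma space_mixture[simp]: "space Q = space Z"
  using sets_eq_imp_space_eq[OF sets_mixture] .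

lemma space_component: "i \<in> {1..M} \<Longrightarrow> space (R i) = space Z"
  using sets_eq_imp_space_eq[OF sets_component] .

lemma emeasure_mixture:
  assumes A: "A \<in> sets Z"
  shows "emeasure Q A = (\<Sum>i\<in>{1..M}. ennreal (\<pi> i) * emeasure (R i) A)"
  unfolding mixture_def
proof (rule emeasure_measure_of_sigma[OF sets.sigma_algebra_axioms _ _ A])
  show "positive (sets Z) (\<lambda>A. \<Sum>i\<in>{1..M}. ennreal (\<pi> i) * emeasure (R i) A)"
    unfolding positive_def by simp
  show "countably_additive (sets Z) (\<lambda>A. \<Sum>i\<in>{1..M}. ennreal (\<pi> i) * emeasure (R i) A)"
    unfolding countably_additive_def
  proof (intro allI impI)
    fix F :: "nat \<Rightarrow> 'a set"
    assume F: "range F \<subseteq> sets Z" "disjoint_family F" "\<Union> (range F) \<in> sets Z"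
    have "(\<Sum>n. \<Sum>i\<in>{1..M}. ennreal (\<pi> i) * emeasure (R i) (F n))
        = (\<Sum>i\<in>{1..M}. \<Sum>n. ennreal (\<pi> i) * emeasure (R i) (F n))"
      by (rule suminf_sum) (rule summableI)
    also have "\<dots> = (\<Sum>i\<in>{1..M}. ennreal (\<pi> i) * emeasure (R i) (\<Union> (range F)))"
    proof (rule sum.cong[OF refl])
      fix i assume "i \<in> {1..M}"
      then have "(\<Sum>n. emeasure (R i) (F n)) = emeasure (R i) (\<Union> (range F))"
        using F sets_component by (intro suminf_emeasure) auto
      then show "(\<Sum>n. ennreal (\<pi> i) * emeasure (R i) (F n))
          = ennreal (\<pi> i) * emeasure (R i) (\<Union> (range F))"
        by simp
    qed
    finally show "(\<Sum>n. \<Sum>i\<in>{1..M}. ennreal (\<pi> i) * emeasure (R i) (F n))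
        = (\<Sum>i\<in>{1..M}. ennreal (\<pi> i) * emeasure (R i) (\<Union> (range F)))" .
  qed
qed

lemma prob_space_mixture: "prob_space Q"
proof (rule prob_spaceI)
  have "emeasure (R i) (space Z) = 1" if "i \<in> {1..M}" for i
    using prob_space.emeasure_space_1[OF prob_space_component[OF that]] space_component[OF that]
    by simp
  then have "emeasure Q (space Q) = (\<Sum>i\<in>{1..M}. ennreal (\<pi> i))"
    by (simp add: emeasure_mixture)
  also have "\<dots> = 1"
    using pi_pos pi_sum by (subst sum_ennreal) (auto intro: less_imp_le)
  finally show "emeasure Q (space Q) = 1" .
qed

sublocale Q: prob_space Q by (rule prob_space_mixture)

lemma absolutely_continuous_component:
  assumes i: "i \<in> {1..M}"
  shows "absolutely_continuous Q (R i)"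
  unfolding absolutely_continuous_def
proof
  fix A assume A: "A \<in> null_sets Q"
  then have A_sets: "A \<in> sets Z" and "emeasure Q A = 0" by auto
  then have "(\<Sum>j\<in>{1..M}. ennreal (\<pi> j) * emeasure (R j) A) = 0"
    by (simp add: emeasure_mixture)
  then have "ennreal (\<pi> i) * emeasure (R i) A = 0"
    using i by (subst (asm) sum_eq_0_iff) auto
  then show "A \<in> null_sets (R i)"
    using A_sets pi_pos[OF i] sets_component[OF i] by auto
qed

lemma AE_sum_RN_deriv_eq_1:
  "AE z in Q. (\<Sum>i\<in>{1..M}. ennreal (\<pi> i) * RN_deriv Q (R i) z) = 1"
proof -
  let ?f = "\<lambda>z. \<Sum>i\<in>{1..M}. ennreal (\<pi> i) * RN_deriv Q (R i) z"
  have f_meas: "?f \<in> borel_measurable Q" by measurable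
  have "emeasure (density Q ?f) A = emeasure (density Q (\<lambda>_. 1)) A" if A[measurable]: "A \<in> sets Q" for A
  proof -
    have "emeasure (density Q ?f) A
        = (\<integral>\<^sup>+z. (\<Sum>i\<in>{1..M}. ennreal (\<pi> i) * (RN_deriv Q (R i) z * indicator A z)) \<partial>Q)"
      using f_meas A by (simp add: emeasure_density sum_distrib_right mult.assoc)
    also have "\<dots> = (\<Sum>i\<in>{1..M}. \<integral>\<^sup>+z. ennreal (\<pi> i) * (RN_deriv Q (R i) z * indicator A z) \<partial>Q)"
      by (intro nn_integral_sum) measurable
    also have "\<dots> = (\<Sum>i\<in>{1..M}. ennreal (\<pi> i) * emeasure (R i) A)"
    proof (rule sum.cong[OF refl])
      fix i assume i: "i \<in> {1..M}"
      have "(\<integral>\<^sup>+z. RN_deriv Q (R i) z * indicator A z \<partial>Q) = (\<integral>\<^sup>+z. indicator A z \<partial>R i)"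
        using absolutely_continuous_component[OF i] sets_component[OF i]
        by (intro Q.RN_deriv_nn_integral[symmetric]) auto
      then show "(\<integral>\<^sup>+z. ennreal (\<pi> i) * (RN_deriv Q (R i) z * indicator A z) \<partial>Q)
          = ennreal (\<pi> i) * emeasure (R i) A"
        using sets_component[OF i] A by (simp add: nn_integral_cmult)
    qed
    also have "\<dots> = emeasure (density Q (\<lambda>_. 1)) A"
      using A by (simp add: emeasure_mixture density_1)
    finally show ?thesis .
  qed
  then have "density Q ?f = density Q (\<lambda>_. 1)"
    by (intro measure_eqI) auto
  then show ?thesis
    by (subst (asm) Q.density_unique_iff) auto
qed

lemma AE_cond_label_prob:
  "AE z in Q. (\<forall>i\<in>{1..M}. 0 \<le> p i z \<and> p i z \<le> 1) \<and> (\<Sum>i\<in>{1..M}. p i z) = 1"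
  using AE_sum_RN_deriv_eq_1
proof eventually_elim
  case (elim z)
  let ?t = "\<lambda>i. ennreal (\<pi> i) * RN_deriv Q (R i) z"
  have t_le: "?t i \<le> 1" if "i \<in> {1..M}" for i
    using elim member_le_sum[of i "{1..M}" ?t] that by auto
  have p_eq: "p i z = enn2real (?t i)" if "i \<in> {1..M}" for i
    using pi_pos[OF that] by (simp add: cond_label_prob_def enn2real_mult)
  have "(\<Sum>i\<in>{1..M}. p i z) = (\<Sum>i\<in>{1..M}. enn2real (?t i))"
    using p_eq by simp
  also have "\<dots> = enn2real (\<Sum>i\<in>{1..M}. ?t i)"
    using t_le by (subst enn2real_sum) (auto intro: le_less_trans[OF _ ennreal_one_less_top])
  finally have "(\<Sum>i\<in>{1..M}. p i z) = 1"
    using elim by simp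
  moreover have "0 \<le> p i z \<and> p i z \<le> 1" if "i \<in> {1..M}" for i
    using p_eq[OF that] t_le[OF that] by (auto simp: enn2real_leI)
  ultimately show ?case by blast
qed

lemma borel_measurable_cond_label_prob[measurable]: "p i \<in> borel_measurable Z"
proof -
  have "p i \<in> borel_measurable Q"
    unfolding cond_label_prob_def by measurable
  then show ?thesis by (simp cong: measurable_cong_sets)
qed

lemma integral_component:
  assumes i: "i \<in> {1..M}" and h: "h \<in> borel_measurable Z"
    and h_bound: "\<And>z. z \<in> space Z \<Longrightarrow> \<bar>h z\<bar> \<le> B"
  shows "integrable Q (\<lambda>z. p i z * h z)"
    and "\<pi> i * (\<integral>z. h z \<partial>R i) = (\<integral>z. p i z * h z \<partial>Q)"
proof -
  interpret Ri: prob_space "R i" by (rule prob_space_component[OF i])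
  have sets_Ri: "sets (R i) = sets Q" using sets_component[OF i] by simp
  have hQ: "h \<in> borel_measurable Q" using h by (simp cong: measurable_cong_sets)
  have "integrable (R i) h"
    using h h_bound space_component[OF i] sets_component[OF i]
    by (intro Ri.integrable_const_bound[where B=B]) (auto cong: measurable_cong_sets)
  then have "integrable Q (\<lambda>z. \<pi> i * (enn2real (RN_deriv Q (R i) z) * h z))"
    using Q.RN_deriv_integrable[OF Ri.sigma_finite_measure_axioms
        absolutely_continuous_component[OF i] sets_Ri hQ] by simp
  then show "integrable Q (\<lambda>z. p i z * h z)"
    by (simp add: cond_label_prob_def mult.assoc)
  show "\<pi> i * (\<integral>z. h z \<partial>R i) = (\<integral>z. p i z * h z \<partial>Q)"
    using Q.RN_deriv_integral[OF Ri.sigma_finite_measure_axioms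
        absolutely_continuous_component[OF i] sets_Ri hQ]
    by (simp add: cond_label_prob_def mult.assoc)
qed

lemma kmd_cross_eq_integral_kform:
  "kmd_cross M \<pi> K Z R = (\<integral>z. kform M K (\<lambda>i. p i z) (\<lambda>i. p i z) \<partial>Q)"
  unfolding kmd_cross_def kform_def ..

lemma AE_abs_kform_cond_label_prob_le:
  "AE z in Q. \<bar>kform M K (\<lambda>i. p i z) (\<lambda>i. p i z)\<bar> \<le> kabs M K"
  using AE_cond_label_prob
proof eventually_elim
  case (elim z)
  then show ?case using abs_kform_le[of M "\<lambda>i. p i z" "\<lambda>i. p i z" K] by auto
qed

lemma integrable_kform_cond_label_prob:
  "integrable Q (\<lambda>z. kform M K (\<lambda>i. p i z) (\<lambda>i. p i z))"
proof (rule Q.integrable_const_bound[where B="kabs M K"])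
  show "AE z in Q. norm (kform M K (\<lambda>i. p i z) (\<lambda>i. p i z)) \<le> kabs M K"
    using AE_abs_kform_cond_label_prob_le by simp
  show "(\<lambda>z. kform M K (\<lambda>i. p i z) (\<lambda>i. p i z)) \<in> borel_measurable Q"
    unfolding kform_def by (simp cong: measurable_cong_sets)
qed

lemma kmd_cross_nonneg:
  assumes "kernel_on M K"
  shows "0 \<le> kmd_cross M \<pi> K Z R"
  unfolding kmd_cross_eq_integral_kform by (intro integral_nonneg_AE AE_I2 kform_nonneg[OF assms])

lemma kmd_cross_le_kabs: "kmd_cross M \<pi> K Z R \<le> kabs M K"
proof -
  have "kmd_cross M \<pi> K Z R \<le> (\<integral>z. kabs M K \<partial>Q)"
    unfolding kmd_cross_eq_integral_kform
    using AE_abs_kform_cond_label_prob_le[of K]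
    by (intro integral_mono_AE integrable_kform_cond_label_prob) (auto elim: eventually_mono)
  then show ?thesis using Q.prob_space by simp
qed

lemma kmd_dual_eq_integral:
  assumes c: "\<And>i. i \<in> {1..M} \<Longrightarrow> c i \<in> borel_measurable Z"
    and c_bound: "\<And>i z. i \<in> {1..M} \<Longrightarrow> \<bar>c i z\<bar> \<le> 1"
  shows "integrable Q (\<lambda>z. \<Sum>j\<in>{1..M}. p j z * kmd_test M K c j z)"
    and "kmd_dual M \<pi> K c R = (\<integral>z. (\<Sum>j\<in>{1..M}. p j z * kmd_test M K c j z) \<partial>Q)"
proof -
  note test = integral_component[OF _ borel_measurable_kmd_test[OF c]
      abs_kmd_test_le[of M c, OF c_bound]]
  show "integrable Q (\<lambda>z. \<Sum>j\<in>{1..M}. p j z * kmd_test M K c j z)"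
    using test(1) by auto
  show "kmd_dual M \<pi> K c R = (\<integral>z. (\<Sum>j\<in>{1..M}. p j z * kmd_test M K c j z) \<partial>Q)"
    unfolding kmd_dual_def using test by (simp add: Bochner_Integration.integral_sum)
qed

lemma kmd_dual_le_kmd_cross:
  assumes K: "kernel_on M K"
    and c: "\<And>i. i \<in> {1..M} \<Longrightarrow> c i \<in> borel_measurable Z"
    and c_bound: "\<And>i z. i \<in> {1..M} \<Longrightarrow> \<bar>c i z\<bar> \<le> 1"
  shows "kmd_dual M \<pi> K c R \<le> kmd_cross M \<pi> K Z R"
proof -
  have "AE z in Q. (\<Sum>j\<in>{1..M}. p j z * kmd_test M K c j z) \<le> kform M K (\<lambda>i. p i z) (\<lambda>i. p i z)"
    using AE_cond_label_prob
  proof eventually_elim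
    case (elim z)
    then show ?case
      using sum_mult_kmd_test[of "\<lambda>j. p j z" M K c z]
        kform_polarization_le[OF K, of "\<lambda>i. c i z" "\<lambda>i. p i z"] by simp
  qed
  then have "(\<integral>z. (\<Sum>j\<in>{1..M}. p j z * kmd_test M K c j z) \<partial>Q)
      \<le> (\<integral>z. kform M K (\<lambda>i. p i z) (\<lambda>i. p i z) \<partial>Q)"
    by (intro integral_mono_AE kmd_dual_eq_integral(1)[OF c c_bound] integrable_kform_cond_label_prob)
  then show ?thesis
    using kmd_dual_eq_integral(2)[OF c c_bound, where K=K] by (simp add: kmd_cross_eq_integral_kform)
qed

text \<open>Clipping to \<open>[0,1]\<close> changes \<open>p\<close> only on a \<open>Q\<close>-null set, but makes it a valid test
  function everywhere, also for laws that are not dominated by \<open>Q\<close>.\<close>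

definition clipped_label_prob :: "nat \<Rightarrow> 'a \<Rightarrow> real" where
  "clipped_label_prob i z = max 0 (min 1 (p i z))"

lemma borel_measurable_clipped_label_prob: "clipped_label_prob i \<in> borel_measurable Z"
  unfolding clipped_label_prob_def by measurable

lemma abs_clipped_label_prob_le: "\<bar>clipped_label_prob i z\<bar> \<le> 1"
  unfolding clipped_label_prob_def by auto

lemma kmd_dual_clipped_label_prob:
  "kmd_dual M \<pi> K clipped_label_prob R = kmd_cross M \<pi> K Z R"
  unfolding kmd_dual_eq_integral(2)[OF borel_measurable_clipped_label_prob
      abs_clipped_label_prob_le] kmd_cross_eq_integral_kform
proof (rule integral_cong_AE)
  show "AE z in Q. (\<Sum>j\<in>{1..M}. p j z * kmd_test M K clipped_label_prob j z)
      = kform M K (\<lambda>i. p i z) (\<lambda>i. p i z)"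
    using AE_cond_label_prob
  proof eventually_elim
    case (elim z)
    then have "\<And>i. i \<in> {1..M} \<Longrightarrow> clipped_label_prob i z = p i z"
      unfolding clipped_label_prob_def by auto
    then have "kform M K (\<lambda>i. clipped_label_prob i z) (\<lambda>i. clipped_label_prob i z)
          = kform M K (\<lambda>i. p i z) (\<lambda>i. p i z)"
        "kform M K (\<lambda>i. clipped_label_prob i z) (\<lambda>i. p i z) = kform M K (\<lambda>i. p i z) (\<lambda>i. p i z)"
      by (auto intro: kform_cong)
    with elim show ?case
      using sum_mult_kmd_test[of "\<lambda>j. p j z" M K clipped_label_prob z] by simp
  qed
qed (use kmd_dual_eq_integral(1)[OF borel_measurable_clipped_label_prob abs_clipped_label_prob_le]
      integrable_kform_cond_label_prob in auto)

end

lemma kmd_cross_bind_le: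
  assumes pi_pos: "\<And>i. i \<in> {1..M} \<Longrightarrow> 0 < \<pi> i" and pi_sum: "(\<Sum>i\<in>{1..M}. \<pi> i) = 1"
    and K: "kernel_on M K" and L: "prob_space L"
    and \<kappa>: "\<And>i. i \<in> {1..M} \<Longrightarrow> \<kappa> i \<in> L \<rightarrow>\<^sub>M prob_algebra Z"
    and cross_meas: "(\<lambda>w. kmd_cross M \<pi> K Z (\<lambda>i. \<kappa> i w)) \<in> borel_measurable L"
  shows "integrable L (\<lambda>w. kmd_cross M \<pi> K Z (\<lambda>i. \<kappa> i w))"
    and "kmd_cross M \<pi> K Z (\<lambda>i. L \<bind> \<kappa> i) \<le> (\<integral>w. kmd_cross M \<pi> K Z (\<lambda>i. \<kappa> i w) \<partial>L)"
proof -
  interpret L: prob_space L by (rule L)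
  have L_alg: "L \<in> space (prob_algebra L)" by (simp add: space_prob_algebra L)
  have mixture_at: "label_mixture M \<pi> Z (\<lambda>i. \<kappa> i w)" if w: "w \<in> space L" for w
  proof (rule label_mixture.intro[OF pi_pos pi_sum])
    fix i assume "i \<in> {1..M}"
    then have "\<kappa> i w \<in> space (prob_algebra Z)" by (rule measurable_space[OF \<kappa> w])
    then show "prob_space (\<kappa> i w)" "sets (\<kappa> i w) = sets Z" by (auto simp: space_prob_algebra)
  qed
  interpret P: label_mixture M \<pi> Z "\<lambda>i. L \<bind> \<kappa> i"
    by (rule label_mixture.intro[OF pi_pos pi_sum prob_space_bind'[OF L_alg \<kappa>] sets_bind'[OF L_alg \<kappa>]])
  let ?c = P.clipped_label_prob
  note c = P.borel_measurable_clipped_label_prob P.abs_clipped_label_prob_le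
  show cross_int: "integrable L (\<lambda>w. kmd_cross M \<pi> K Z (\<lambda>i. \<kappa> i w))"
  proof (rule L.integrable_const_bound[where B="kabs M K"])
    show "AE w in L. norm (kmd_cross M \<pi> K Z (\<lambda>i. \<kappa> i w)) \<le> kabs M K"
    proof (rule AE_I2)
      fix w assume w: "w \<in> space L"
      show "norm (kmd_cross M \<pi> K Z (\<lambda>i. \<kappa> i w)) \<le> kabs M K"
        using label_mixture.kmd_cross_nonneg[OF mixture_at[OF w] K]
          label_mixture.kmd_cross_le_kabs[OF mixture_at[OF w]] by simp
    qed
  qed (rule cross_meas)
  have "kmd_cross M \<pi> K Z (\<lambda>i. L \<bind> \<kappa> i) = kmd_dual M \<pi> K ?c (\<lambda>i. L \<bind> \<kappa> i)"
    by (rule P.kmd_dual_clipped_label_prob[symmetric])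
  also have "\<dots> = (\<integral>w. kmd_dual M \<pi> K ?c (\<lambda>i. \<kappa> i w) \<partial>L)"
    by (rule kmd_dual_bind(2)[where c="?c", OF L \<kappa> c])
  also have "\<dots> \<le> (\<integral>w. kmd_cross M \<pi> K Z (\<lambda>i. \<kappa> i w) \<partial>L)"
    by (rule integral_mono[OF kmd_dual_bind(1)[where c="?c", OF L \<kappa> c] cross_int
          label_mixture.kmd_dual_le_kmd_cross[where c="?c", OF mixture_at K c]])
  finally show "kmd_cross M \<pi> K Z (\<lambda>i. L \<bind> \<kappa> i) \<le> (\<integral>w. kmd_cross M \<pi> K Z (\<lambda>i. \<kappa> i w) \<partial>L)" .
qed

lemma distr_eq_bind_cond_distr:
  assumes \<Omega>: "prob_space \<Omega>" and W: "W \<in> \<Omega> \<rightarrow>\<^sub>M N" and Y: "Y \<in> \<Omega> \<rightarrow>\<^sub>M Z"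
    and \<kappa>: "\<kappa> \<in> N \<rightarrow>\<^sub>M prob_algebra Z"
    and cond: "\<And>A B. A \<in> sets N \<Longrightarrow> B \<in> sets Z \<Longrightarrow>
      measure \<Omega> {\<omega>\<in>space \<Omega>. W \<omega> \<in> A \<and> Y \<omega> \<in> B}
        = (\<integral>w. indicator A w * measure (\<kappa> w) B \<partial>distr \<Omega> N W)"
  shows "distr \<Omega> Z Y = distr \<Omega> N W \<bind> \<kappa>"
proof (rule measure_eqI)
  interpret \<Omega>: prob_space \<Omega> by (rule \<Omega>)
  let ?PW = "distr \<Omega> N W"
  interpret PW: prob_space ?PW by (rule \<Omega>.prob_space_distr[OF W])
  have PW_alg: "?PW \<in> space (prob_algebra N)"
    by (simp add: space_prob_algebra PW.prob_space_axioms)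
  have \<kappa>_w: "prob_space (\<kappa> w)" if "w \<in> space N" for w
    using measurable_space[OF \<kappa> that] by (simp add: space_prob_algebra)
  show "sets (distr \<Omega> Z Y) = sets (?PW \<bind> \<kappa>)"
    using sets_bind'[OF PW_alg \<kappa>] by simp
  fix B assume "B \<in> sets (distr \<Omega> Z Y)"
  then have B: "B \<in> sets Z" by simp
  have "Y -` B \<inter> space \<Omega> = {\<omega>\<in>space \<Omega>. W \<omega> \<in> space N \<and> Y \<omega> \<in> B}"
    using measurable_space[OF W] by auto
  then have "emeasure (distr \<Omega> Z Y) B = measure \<Omega> {\<omega>\<in>space \<Omega>. W \<omega> \<in> space N \<and> Y \<omega> \<in> B}"
    using Y B by (simp add: emeasure_distr \<Omega>.emeasure_eq_measure)
  also have "\<dots> = (\<integral>w. indicator (space N) w * measure (\<kappa> w) B \<partial>?PW)"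
    using cond[OF sets.top B] by simp
  also have "\<dots> = (\<integral>w. measure (\<kappa> w) B \<partial>?PW)"
    by (intro arg_cong[where f=ennreal] Bochner_Integration.integral_cong) (auto simp: indicator_def)
  also have "\<dots> = (\<integral>\<^sup>+w. measure (\<kappa> w) B \<partial>?PW)"
  proof (rule nn_integral_eq_integral[symmetric])
    have "(\<lambda>w. measure (\<kappa> w) B) \<in> borel_measurable N"
      using \<kappa> B by measurable
    then show "integrable ?PW (\<lambda>w. measure (\<kappa> w) B)"
      using \<kappa>_w by (intro PW.integrable_const_bound[where B=1]) (auto simp: prob_space.prob_le_1)
  qed simp
  also have "\<dots> = (\<integral>\<^sup>+w. emeasure (\<kappa> w) B \<partial>?PW)"
    using \<kappa>_w by (intro nn_integral_cong) (simp add: finite_measure.emeasure_eq_measure prob_space.finite_measure)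
  also have "\<dots> = emeasure (?PW \<bind> \<kappa>) B"
    by (rule emeasure_bind_prob_algebra[OF PW_alg \<kappa> B, symmetric])
  finally show "emeasure (distr \<Omega> Z Y) B = emeasure (?PW \<bind> \<kappa>) B" .
qed

lemma kmd_cong:
  assumes "\<And>i. i \<in> {1..M} \<Longrightarrow> R i = R' i"
  shows "kmd M \<pi> K Z R = kmd M \<pi> K Z R'"
proof -
  have "(\<lambda>A. \<Sum>i\<in>{1..M}. ennreal (\<pi> i) * emeasure (R i) A)
      = (\<lambda>A. \<Sum>i\<in>{1..M}. ennreal (\<pi> i) * emeasure (R' i) A)"
    using assms by (intro ext sum.cong) auto
  then have mixture_eq: "mixture M \<pi> Z R = mixture M \<pi> Z R'"
    unfolding mixture_def by simp
  have "cond_label_prob M \<pi> Z R i = cond_label_prob M \<pi> Z R' i" if "i \<in> {1..M}" for i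
    unfolding cond_label_prob_def mixture_eq assms[OF that] ..
  then have "kmd_cross M \<pi> K Z R = kmd_cross M \<pi> K Z R'"
    unfolding kmd_cross_def mixture_eq
    by (intro Bochner_Integration.integral_cong refl sum.cong) auto
  then show ?thesis
    unfolding kmd_def by simp
qed

theorem corollary1:
  fixes M :: nat and \<pi> :: "nat \<Rightarrow> real" and K :: "nat \<Rightarrow> nat \<Rightarrow> real"
    and Z :: "'a measure" and N :: "'b measure" and \<Omega> :: "'c measure"
    and W :: "'c \<Rightarrow> 'b" and Y :: "nat \<Rightarrow> 'c \<Rightarrow> 'a" and \<kappa> :: "nat \<Rightarrow> 'b \<Rightarrow> 'a measure"
  assumes pi_range: "\<forall>i\<in>{1..M}. 0 < \<pi> i \<and> \<pi> i < 1"
    and pi_sum: "(\<Sum>i\<in>{1..M}. \<pi> i) = 1"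
    and kernel: "kernel_on M K"
    and nondeg: "kmd_diag M \<pi> K - kmd_indep M \<pi> K > 0"
    and prob: "prob_space \<Omega>"
    and W_meas: "W \<in> measurable \<Omega> N"
    and Y_meas: "\<forall>i\<in>{1..M}. Y i \<in> measurable \<Omega> Z"
    and \<kappa>_kernel: "\<forall>i\<in>{1..M}. \<kappa> i \<in> measurable N (prob_algebra Z)"
    and \<kappa>_cond: "\<forall>i\<in>{1..M}. \<forall>A\<in>sets N. \<forall>B\<in>sets Z.
        measure \<Omega> {\<omega>\<in>space \<Omega>. W \<omega> \<in> A \<and> Y i \<omega> \<in> B}
          = (\<integral>w. indicator A w * measure (\<kappa> i w) B \<partial>distr \<Omega> N W)"
    and eta_meas: "(\<lambda>w. kmd M \<pi> K Z (\<lambda>i. \<kappa> i w)) \<in> borel_measurable N"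
  shows "(\<integral>w. kmd M \<pi> K Z (\<lambda>i. \<kappa> i w) \<partial>distr \<Omega> N W)
           \<ge> kmd M \<pi> K Z (\<lambda>i. distr \<Omega> Z (Y i))"
proof -
  define D where "D = kmd_diag M \<pi> K - kmd_indep M \<pi> K"
  let ?PW = "distr \<Omega> N W"
  interpret PW: prob_space ?PW by (rule prob_space.prob_space_distr[OF prob W_meas])
  have pi_pos: "\<And>i. i \<in> {1..M} \<Longrightarrow> 0 < \<pi> i" using pi_range by auto
  have kmd_eq: "kmd M \<pi> K Z R = (kmd_cross M \<pi> K Z R - kmd_indep M \<pi> K) / D" for R :: "nat \<Rightarrow> 'a measure"
    unfolding kmd_def D_def ..
  have "distr \<Omega> Z (Y i) = ?PW \<bind> \<kappa> i" if "i \<in> {1..M}" for i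
    using Y_meas \<kappa>_kernel \<kappa>_cond that by (intro distr_eq_bind_cond_distr[OF prob W_meas]) auto
  then have law_Y: "kmd M \<pi> K Z (\<lambda>i. distr \<Omega> Z (Y i)) = kmd M \<pi> K Z (\<lambda>i. ?PW \<bind> \<kappa> i)"
    by (rule kmd_cong)
  have \<kappa>_PW: "\<And>i. i \<in> {1..M} \<Longrightarrow> \<kappa> i \<in> ?PW \<rightarrow>\<^sub>M prob_algebra Z"
    using \<kappa>_kernel by (simp cong: measurable_cong_sets)
  have "(\<lambda>w. D * kmd M \<pi> K Z (\<lambda>i. \<kappa> i w) + kmd_indep M \<pi> K) \<in> borel_measurable ?PW"
    using eta_meas by (simp cong: measurable_cong_sets)
  then have cross_meas: "(\<lambda>w. kmd_cross M \<pi> K Z (\<lambda>i. \<kappa> i w)) \<in> borel_measurable ?PW"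
    using nondeg by (simp add: kmd_eq D_def)
  note cross_bind = kmd_cross_bind_le[OF pi_pos pi_sum kernel PW.prob_space_axioms \<kappa>_PW cross_meas]
  have "kmd M \<pi> K Z (\<lambda>i. distr \<Omega> Z (Y i))
      = (kmd_cross M \<pi> K Z (\<lambda>i. ?PW \<bind> \<kappa> i) - kmd_indep M \<pi> K) / D"
    by (simp add: law_Y kmd_eq)
  also have "\<dots> \<le> ((\<integral>w. kmd_cross M \<pi> K Z (\<lambda>i. \<kappa> i w) \<partial>?PW) - kmd_indep M \<pi> K) / D"
    using cross_bind(2) nondeg by (simp add: D_def divide_right_mono)
  also have "\<dots> = (\<integral>w. (kmd_cross M \<pi> K Z (\<lambda>i. \<kappa> i w) - kmd_indep M \<pi> K) / D \<partial>?PW)"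
    using cross_bind(1) PW.prob_space by simp
  also have "\<dots> = (\<integral>w. kmd M \<pi> K Z (\<lambda>i. \<kappa> i w) \<partial>?PW)"
    by (simp add: kmd_eq)
  finally show ?thesis .
qed

end
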